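(* Let $\mathcal{G}$ be an undirected weighted graph (nonzero real weights, possibly negative) with $c$ connected components, let $\mathcal{F}$ be a spanning forest with cycle subgraph $\mathcal{C}$, and suppose $L(\mathcal{G})$ has $n_+$ positive, $n_-$ negative and $n_0$ zero eigenvalues (counted with multiplicity). Then the essential edge Laplacian $L_{ess}(\mathcal{F})=L_e(\mathcal{F})R_{(\mathcal{F},\mathcal{C})}WR_{(\mathcal{F},\mathcal{C})}^T$ has only real eigenvalues, of which $n_+$ are positive, $n_-$ are negative and $n_0-c$ are zero (counted with multiplicity).
   Context: A weighted graph $\mathcal{G}=(\mathcal{V},\mathcal{E},\mathcal{W})$ has weight function $\mathcal{W}:\mathcal{E}\to\mathbb{R}\setminus\{0\}$; $W$ is the diagonal matrix of edge weights. With an arbitrary orientation of edges, the incidence matrix $E\in\mathbb{R}^{|\mathcal{V}|\times|\mathcal{E}|}$ has in the column of edge $(i,j)$ entry $+1$ in row $i$, $-1$ in row $j$, $0$ elsewhere; $L(\mathcal{G})=EWE^T$. A spanning forest $\mathcal{F}$ is an acyclic subgraph with $|\mathcal{V}|-c$ edges containing a spanning tree of each component; the cycle subgraph $\mathcal{C}$ consists of the remaining edges. Edges are ordered so $E=[E_{\mathcal{F}}\ E_{\mathcal{C}}]$ and $W$ correspondingly. $L_e(\mathcal{F})=E_{\mathcal{F}}^TE_{\mathcal{F}}$ (invertible), and $R_{(\mathcal{F},\mathcal{C})}=[\,I\ \ L_e(\mathcal{F})^{-1}E_{\mathcal{F}}^TE_{\mathcal{C}}\,]$. *)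

theory Defs
  imports Complex_Main "Jordan_Normal_Form.Jordan_Normal_Form" "Jordan_Normal_Form.Gauss_Jordan_Elimination"
begin

text \<open>A graph on vertex set {0..<nv} is given by a list of edges (i,j); the pair order is the
  arbitrary orientation. Edge k has weight w k.\<close>

definition valid_graph :: "nat \<Rightarrow> (nat \<times> nat) list \<Rightarrow> bool" where
  "valid_graph nv es \<longleftrightarrow>
     (\<forall>(i,j)\<in>set es. i < nv \<and> j < nv \<and> i \<noteq> j) \<and>
     (\<forall>k<length es. \<forall>l<length es. k \<noteq> l \<longrightarrow>
         {fst (es!k), snd (es!k)} \<noteq> {fst (es!l), snd (es!l)})"

definition adj :: "(nat \<times> nat) list \<Rightarrow> nat \<Rightarrow> nat \<Rightarrow> bool" where
  "adj es a b \<longleftrightarrow> (\<exists>(x,y)\<in>set es. (a = x \<and> b = y) \<or> (a = y \<and> b = x))"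

definition connected_in :: "(nat \<times> nat) list \<Rightarrow> nat \<Rightarrow> nat \<Rightarrow> bool" where
  "connected_in es = (adj es)\<^sup>*\<^sup>*"

definition num_components :: "nat \<Rightarrow> (nat \<times> nat) list \<Rightarrow> nat" where
  "num_components nv es = card ((\<lambda>v. {u \<in> {0..<nv}. connected_in es u v}) ` {0..<nv})"

definition acyclic_edges :: "(nat \<times> nat) list \<Rightarrow> bool" where
  "acyclic_edges fs \<longleftrightarrow> (\<forall>i<length fs.
      \<not> connected_in (take i fs @ drop (Suc i) fs) (fst (fs!i)) (snd (fs!i)))"

definition spanning_forest_prefix :: "nat \<Rightarrow> (nat \<times> nat) list \<Rightarrow> nat \<Rightarrow> bool" where
  "spanning_forest_prefix nv es k \<longleftrightarrow>
     k \<le> length es \<and> k = nv - num_components nv es \<and>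
     acyclic_edges (take k es) \<and>
     (\<forall>u<nv. \<forall>v<nv. connected_in (take k es) u v \<longleftrightarrow> connected_in es u v)"

definition incidence :: "nat \<Rightarrow> (nat \<times> nat) list \<Rightarrow> real mat" where
  "incidence nv es = mat nv (length es)
     (\<lambda>(v,k). if v = fst (es!k) then 1 else if v = snd (es!k) then -1 else 0)"

definition weight_mat :: "nat \<Rightarrow> (nat \<Rightarrow> real) \<Rightarrow> real mat" where
  "weight_mat m w = mat m m (\<lambda>(i,j). if i = j then w i else 0)"

definition laplacian :: "nat \<Rightarrow> (nat \<times> nat) list \<Rightarrow> (nat \<Rightarrow> real) \<Rightarrow> real mat" where
  "laplacian nv es w = incidence nv es * weight_mat (length es) w * transpose_mat (incidence nv es)"

definition edge_laplacian :: "nat \<Rightarrow> (nat \<times> nat) list \<Rightarrow> real mat" where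
  "edge_laplacian nv fs = transpose_mat (incidence nv fs) * incidence nv fs"

text \<open>R = [ I  L_e(F)^{-1} E_F^T E_C ], where F = first k edges, C = remaining edges.\<close>
definition R_mat :: "nat \<Rightarrow> (nat \<times> nat) list \<Rightarrow> nat \<Rightarrow> real mat" where
  "R_mat nv es k =
     (let X = the (mat_inverse (edge_laplacian nv (take k es))) *
              transpose_mat (incidence nv (take k es)) * incidence nv (drop k es)
      in mat k (length es) (\<lambda>(i,j). if j < k then (if i = j then 1 else 0) else X $$ (i, j - k)))"

definition essential_edge_laplacian :: "nat \<Rightarrow> (nat \<times> nat) list \<Rightarrow> (nat \<Rightarrow> real) \<Rightarrow> nat \<Rightarrow> real mat" where
  "essential_edge_laplacian nv es w k =
     edge_laplacian nv (take k es) * R_mat nv es k * weight_mat (length es) w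
       * transpose_mat (R_mat nv es k)"

definition cpoly :: "real mat \<Rightarrow> complex poly" where
  "cpoly A = char_poly (map_mat complex_of_real A)"

definition only_real_eigenvalues :: "real mat \<Rightarrow> bool" where
  "only_real_eigenvalues A \<longleftrightarrow> (\<forall>z. poly (cpoly A) z = 0 \<longrightarrow> Im z = 0)"

definition n_pos :: "real mat \<Rightarrow> nat" where
  "n_pos A = (\<Sum>z\<in>{z. poly (cpoly A) z = 0 \<and> Im z = 0 \<and> Re z > 0}. order z (cpoly A))"

definition n_neg :: "real mat \<Rightarrow> nat" where
  "n_neg A = (\<Sum>z\<in>{z. poly (cpoly A) z = 0 \<and> Im z = 0 \<and> Re z < 0}. order z (cpoly A))"

definition n_zero :: "real mat \<Rightarrow> nat" where
  "n_zero A = (if poly (cpoly A) 0 = 0 then order 0 (cpoly A) else 0)"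

end

theory Submission
  imports Defs
begin

text \<open>
  Let \<open>E = [E_F E_C]\<close> be the incidence matrix split into forest and cycle edges.
  Because the forest edges are acyclic, \<open>E_F\<close> has trivial kernel, so the edge
  Laplacian \<open>L_e(F) = E_F\<^sup>T E_F\<close> is invertible; because the forest spans every component,
  each cycle-edge column of \<open>E_C\<close> lies in the column space of \<open>E_F\<close>, whence
  \<open>E_F L_e(F)\<^sup>-\<^sup>1 E_F\<^sup>T E_C = E_C\<close> and therefore \<open>E = E_F R\<close>.  With \<open>M = R W R\<^sup>T\<close> we get
  \<open>L = (E_F M) E_F\<^sup>T\<close> and \<open>L_ess = E_F\<^sup>T (E_F M)\<close>, a pair of products \<open>AB\<close>, \<open>BA\<close>.
  Sylvester's determinant identity gives \<open>x\<^sup>k \<chi>\<^sub>A\<^sub>B = x\<^sup>n \<chi>\<^sub>B\<^sub>A\<close>, and since the forest has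
  \<open>k = n - c\<close> edges, \<open>\<chi>\<^sub>L = x\<^sup>c \<chi>\<^sub>L\<^sub>e\<^sub>s\<^sub>s\<close>.  As \<open>L\<close> is real symmetric its eigenvalues are
  real, and the factorisation transfers the inertia: nonzero eigenvalues agree with
  multiplicities, and the zero eigenvalue loses exactly \<open>c\<close> copies.
\<close>

section \<open>Linear algebra\<close>

text \<open>Sylvester's determinant identity in scaled form:
  \<open>x\<^sup>k det(xI\<^sub>n - AB) = x\<^sup>n det(xI\<^sub>k - BA)\<close>, via two block eliminations of one block matrix.\<close>
lemma det_sylvester:
  fixes A :: "'a :: field mat"
  assumes A: "A \<in> carrier_mat n k" and B: "B \<in> carrier_mat k n"
  shows "x ^ k * det (x \<cdot>\<^sub>m 1\<^sub>m n - A * B) = x ^ n * det (x \<cdot>\<^sub>m 1\<^sub>m k - B * A)"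
proof -
  define T where "T = four_block_mat (x \<cdot>\<^sub>m 1\<^sub>m n) A B (1\<^sub>m k)"
  define U1 where "U1 = four_block_mat (1\<^sub>m n) (0\<^sub>m n k) (- B) (x \<cdot>\<^sub>m 1\<^sub>m k)"
  define U2 where "U2 = four_block_mat (1\<^sub>m n) (0\<^sub>m n k) (- B) (1\<^sub>m k)"
  have T: "T \<in> carrier_mat (n+k) (n+k)" unfolding T_def using A B by auto
  have U1: "U1 \<in> carrier_mat (n+k) (n+k)" unfolding U1_def using A B by auto
  have U2: "U2 \<in> carrier_mat (n+k) (n+k)" unfolding U2_def using A B by auto
  have det_U1: "det U1 = x ^ k" unfolding U1_def
    by (subst det_four_block_mat_upper_right_zero[of _ n _ k], insert B, auto)
  have det_U2: "det U2 = 1" unfolding U2_def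
    by (subst det_four_block_mat_upper_right_zero[of _ n _ k], insert B, auto)
  have U1T: "U1 * T = four_block_mat (x \<cdot>\<^sub>m 1\<^sub>m n) A (0\<^sub>m k n) (x \<cdot>\<^sub>m 1\<^sub>m k - B * A)"
    unfolding U1_def T_def
    by (subst mult_four_block_mat[of _ n n _ k _ k, OF _ _ _ _ _ A B], insert A B, auto)
  have TU2: "T * U2 = four_block_mat (x \<cdot>\<^sub>m 1\<^sub>m n - A * B) A (0\<^sub>m k n) (1\<^sub>m k)"
    unfolding U2_def T_def
    by (subst mult_four_block_mat[of _ n n _ k _ k, OF _ A B], insert A B, auto)
  have "x ^ k * det T = x ^ n * det (x \<cdot>\<^sub>m 1\<^sub>m k - B * A)"
    using det_mult[OF U1 T] det_U1 unfolding U1T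
    by (subst (asm) det_four_block_mat_lower_left_zero[of _ n _ k], insert A B, auto)
  moreover have "det T = det (x \<cdot>\<^sub>m 1\<^sub>m n - A * B)"
    using det_mult[OF T U2] det_U2 unfolding TU2
    by (subst (asm) det_four_block_mat_lower_left_zero[of _ n _ k], insert A B, auto)
  ultimately show ?thesis by simp
qed

lemma char_poly_mult_commute:
  fixes A :: "'a :: field_char_0 mat"
  assumes A: "A \<in> carrier_mat n k" and B: "B \<in> carrier_mat k n"
  shows "[:0,1:] ^ k * char_poly (A * B) = [:0,1:] ^ n * char_poly (B * A)"
proof (rule poly_eq_poly_eq_iff[THEN iffD1], rule ext)
  fix x
  have neg_char: "- char_matrix M x = x \<cdot>\<^sub>m 1\<^sub>m d - M" if "M \<in> carrier_mat d d" for M :: "'a mat" and d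
    using that unfolding char_matrix_def by (intro eq_matI, auto)
  have AB: "A * B \<in> carrier_mat n n" and BA: "B * A \<in> carrier_mat k k" using A B by auto
  show "poly ([:0,1:] ^ k * char_poly (A * B)) x = poly ([:0,1:] ^ n * char_poly (B * A)) x"
    unfolding poly_mult poly_power char_poly_matrix[OF AB] char_poly_matrix[OF BA]
      neg_char[OF AB] neg_char[OF BA]
    using det_sylvester[OF A B, of x] by simp
qed

text \<open>A real symmetric matrix has only real (complex) eigenvalues: for an eigenvector \<open>v\<close>,
  the Hermitian form \<open>v\<^sup>* A v = \<lambda> |v|\<^sup>2\<close> is real.\<close>
lemma symmetric_real_eigenvalues:
  fixes A :: "real mat"
  assumes A: "A \<in> carrier_mat n n" and sym: "transpose_mat A = A"
    and root: "poly (char_poly (map_mat complex_of_real A)) z = 0"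
  shows "Im z = 0"
proof -
  let ?C = "map_mat complex_of_real A"
  have C: "?C \<in> carrier_mat n n" using A by auto
  have S: "A $$ (i,j) = A $$ (j,i)" if "i < n" "j < n" for i j
    using that A arg_cong[OF sym, of "\<lambda>M. M $$ (j,i)"] by auto
  from root eigenvalue_root_char_poly[OF C] obtain v where "eigenvector ?C v z"
    unfolding eigenvalue_def by auto
  hence v: "v \<in> carrier_vec n" "v \<noteq> 0\<^sub>v n" and Cv: "?C *\<^sub>v v = z \<cdot>\<^sub>v v"
    unfolding eigenvector_def using C by auto
  define s where "s = (\<Sum>i<n. \<Sum>j<n. cnj (v $ i) * complex_of_real (A $$ (i,j)) * v $ j)"
  define r where "r = (\<Sum>i<n. (cmod (v $ i))\<^sup>2)"
  have "s = (\<Sum>i<n. cnj (v $ i) * (?C *\<^sub>v v) $ i)"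
    unfolding s_def using A v
    by (auto simp: scalar_prod_def sum_distrib_left mult.assoc
        intro!: sum.cong sum.reindex_bij_witness[of _ id id])
  also have "\<dots> = z * (\<Sum>i<n. cnj (v $ i) * v $ i)" unfolding Cv using v
    by (auto simp: sum_distrib_left intro!: sum.cong)
  also have "(\<Sum>i<n. cnj (v $ i) * v $ i) = complex_of_real r"
    unfolding r_def of_real_sum
  proof (intro sum.cong refl)
    fix i
    show "cnj (v $ i) * v $ i = complex_of_real ((cmod (v $ i))\<^sup>2)"
      using complex_norm_square[of "v $ i"] by (simp add: mult.commute)
  qed
  finally have s_eq: "s = z * complex_of_real r" .
  have "cnj s = (\<Sum>i<n. \<Sum>j<n. v $ i * complex_of_real (A $$ (i,j)) * cnj (v $ j))"
    unfolding s_def by (simp add: cnj_sum)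
  also have "\<dots> = (\<Sum>j<n. \<Sum>i<n. v $ i * complex_of_real (A $$ (i,j)) * cnj (v $ j))"
    by (rule sum.swap)
  also have "\<dots> = s" unfolding s_def using S by (intro sum.cong refl, auto simp: ac_simps)
  finally have "Im (cnj s) = Im s" by simp
  hence "Im s = 0" by simp
  from v obtain i where i: "i < n" "v $ i \<noteq> 0"
    by (metis carrier_vecD eq_vecI index_zero_vec(1) index_zero_vec(2))
  have "r > 0" unfolding r_def by (rule sum_pos2[of _ i], insert i, auto)
  with s_eq \<open>Im s = 0\<close> show ?thesis by simp
qed

text \<open>The Gram matrix \<open>E\<^sup>T E\<close> of a real matrix with trivial kernel is nonsingular,
  since \<open>E\<^sup>T E y = 0\<close> forces \<open>|Ey|\<^sup>2 = 0\<close>.\<close>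
lemma gram_det_nonzero:
  fixes E :: "real mat"
  assumes E: "E \<in> carrier_mat n m"
    and inj: "\<And>y. y \<in> carrier_vec m \<Longrightarrow> E *\<^sub>v y = 0\<^sub>v n \<Longrightarrow> y = 0\<^sub>v m"
  shows "det (transpose_mat E * E) \<noteq> 0"
proof
  have G: "transpose_mat E * E \<in> carrier_mat m m" using E by auto
  assume "det (transpose_mat E * E) = 0"
  from this[unfolded det_0_iff_vec_prod_zero[OF G]] obtain y where
    y: "y \<in> carrier_vec m" "y \<noteq> 0\<^sub>v m" and Gy: "(transpose_mat E * E) *\<^sub>v y = 0\<^sub>v m" by auto
  have "(transpose_mat E *\<^sub>v (E *\<^sub>v y)) \<bullet> y = 0" using Gy E y by simp
  hence "(E *\<^sub>v y) \<bullet>c (E *\<^sub>v y) = 0"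
    using transpose_vec_mult_scalar[OF E y(1), of "E *\<^sub>v y"] E y by simp
  hence "E *\<^sub>v y = 0\<^sub>v n" using E y by (subst (asm) conjugate_square_eq_0_vec[of _ n], auto)
  with inj y show False by auto
qed

lemma mat_inverse_nonsingular:
  fixes G :: "'a :: field mat"
  assumes G: "G \<in> carrier_mat n n" and det: "det G \<noteq> 0"
  obtains Gi where "mat_inverse G = Some Gi" "Gi * G = 1\<^sub>m n" "Gi \<in> carrier_mat n n"
proof (cases "mat_inverse G")
  case None
  with mat_inverse(1)[OF G, where b=undefined] det_non_zero_imp_unit[OF G det, where b=undefined]
  show ?thesis by blast
next
  case (Some Gi)
  with mat_inverse(2)[OF G Some] that show ?thesis by auto
qed

lemma mult_unit_vec_col:
  fixes A :: "'a :: semiring_1 mat"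
  assumes "A \<in> carrier_mat m n" "i < n"
  shows "A *\<^sub>v unit_vec n i = col A i"
  using assms by (intro eq_vecI, auto)

lemma cpoly_nonzero: "A \<in> carrier_mat n n \<Longrightarrow> cpoly A \<noteq> 0"
  unfolding cpoly_def using degree_monic_char_poly[of "map_mat complex_of_real A" n]
  by (metis coeff_0 map_carrier_mat zero_neq_one)

section \<open>Incidence matrices of forests\<close>

definition edges_in :: "nat \<Rightarrow> (nat \<times> nat) list \<Rightarrow> bool" where
  "edges_in nv fs \<longleftrightarrow> (\<forall>(i,j)\<in>set fs. i < nv \<and> j < nv \<and> i \<noteq> j)"

lemma edges_in_take: "edges_in nv es \<Longrightarrow> edges_in nv (take k es)"
  unfolding edges_in_def by (auto dest: in_set_takeD)

lemma edges_in_drop: "edges_in nv es \<Longrightarrow> edges_in nv (drop k es)"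
  unfolding edges_in_def by (auto dest: in_set_dropD)

lemma edges_in_nth:
  assumes "edges_in nv fs" "i < length fs"
  shows "fst (fs!i) < nv" "snd (fs!i) < nv" "fst (fs!i) \<noteq> snd (fs!i)"
  using assms nth_mem[OF assms(2)] unfolding edges_in_def by (cases "fs!i", auto)+

lemma num_components_le: "num_components nv es \<le> nv"
  unfolding num_components_def by (metis card_atLeastLessThan card_image_le diff_zero finite_atLeastLessThan)

lemma incidence_carrier[simp]: "incidence nv fs \<in> carrier_mat nv (length fs)"
  and incidence_dims[simp]: "dim_row (incidence nv fs) = nv" "dim_col (incidence nv fs) = length fs"
  unfolding incidence_def by auto

lemma incidence_index:
  "v < nv \<Longrightarrow> i < length fs \<Longrightarrow> incidence nv fs $$ (v,i) =
    (if v = fst (fs!i) then 1 else if v = snd (fs!i) then -1 else 0)"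
  unfolding incidence_def by auto

lemma incidence_col:
  assumes ok: "edges_in nv fs" and i: "i < length fs"
  shows "col (incidence nv fs) i = unit_vec nv (fst (fs!i)) - unit_vec nv (snd (fs!i))"
  using edges_in_nth[OF ok i] i by (intro eq_vecI, auto simp: incidence_index)

lemma mem_remove_nth:
  assumes "i < length fs" "i \<noteq> j"
  shows "fs ! i \<in> set (take j fs @ drop (Suc j) fs)"
proof (cases "i < j")
  case True
  then show ?thesis using assms by (metis UnI1 length_take min_less_iff_conj nth_mem nth_take set_append)
next
  case False
  then have "drop (Suc j) fs ! (i - Suc j) = fs ! i" "i - Suc j < length (drop (Suc j) fs)"
    using assms by auto
  then show ?thesis by (metis UnI2 nth_mem set_append)
qed

text \<open>For edge \<open>j = (a,b)\<close>
  let \<open>S\<close> be the vertices reachable from \<open>a\<close> without \<open>j\<close>; summing the rows of \<open>E y = 0\<close>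
  over \<open>S\<close> isolates \<open>y\<^sub>j\<close>, because \<open>j\<close> is the only edge leaving \<open>S\<close>.\<close>
lemma incidence_acyclic_kernel:
  assumes ok: "edges_in nv fs" and ac: "acyclic_edges fs"
    and y: "y \<in> carrier_vec (length fs)" and Ey: "incidence nv fs *\<^sub>v y = 0\<^sub>v nv"
  shows "y = 0\<^sub>v (length fs)"
proof (rule eq_vecI)
  fix j assume "j < dim_vec (0\<^sub>v (length fs))"
  hence j: "j < length fs" by simp
  let ?E = "incidence nv fs"
  define S where "S = {v. v < nv \<and> connected_in (take j fs @ drop (Suc j) fs) (fst (fs!j)) v}"
  have aS: "fst (fs!j) \<in> S" and bS: "snd (fs!j) \<notin> S"
    using edges_in_nth[OF ok j] ac j unfolding S_def connected_in_def acyclic_edges_def by auto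
  have cut: "(fst (fs!i) \<in> S) = (snd (fs!i) \<in> S)" if i: "i < length fs" "i \<noteq> j" for i
  proof -
    obtain p q where pq: "fs ! i = (p,q)" by force
    have "adj (take j fs @ drop (Suc j) fs) p q" "adj (take j fs @ drop (Suc j) fs) q p"
      using mem_remove_nth[OF i] pq unfolding adj_def by force+
    thus ?thesis using edges_in_nth[OF ok i(1)] pq unfolding S_def connected_in_def
      by (auto intro: rtranclp.rtrancl_into_rtrancl)
  qed
  have row_sum: "(\<Sum>v\<in>S. ?E $$ (v,i)) = (if i = j then 1 else 0)" if i: "i < length fs" for i
  proof -
    have "(\<Sum>v\<in>S. ?E $$ (v,i)) =
        (\<Sum>v\<in>S. (if v = fst (fs!i) then 1 else 0) - (if v = snd (fs!i) then 1 else 0))"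
      using edges_in_nth[OF ok i] by (intro sum.cong refl, auto simp: S_def incidence_index i)
    also have "\<dots> = (if fst (fs!i) \<in> S then 1 else 0) - (if snd (fs!i) \<in> S then 1 else 0)"
      unfolding sum_subtractf by (simp add: S_def sum.delta')
    finally show ?thesis using cut[OF i] aS bS by auto
  qed
  have "0 = (\<Sum>v\<in>S. (?E *\<^sub>v y) $ v)" unfolding Ey S_def by simp
  also have "\<dots> = (\<Sum>v\<in>S. \<Sum>i<length fs. ?E $$ (v,i) * y $ i)"
    using y by (intro sum.cong refl, auto simp: S_def scalar_prod_def lessThan_atLeast0)
  also have "\<dots> = (\<Sum>i<length fs. (\<Sum>v\<in>S. ?E $$ (v,i)) * y $ i)"
    by (subst sum.swap, simp add: sum_distrib_right)
  also have "\<dots> = (\<Sum>i<length fs. if i = j then y $ i else 0)"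
    by (intro sum.cong refl, simp add: row_sum)
  also have "\<dots> = y $ j" using j by simp
  finally show "y $ j = 0\<^sub>v (length fs) $ j" using j by simp
qed (use y in simp)

text \<open>If \<open>a\<close> and \<open>b\<close> are connected, then \<open>e\<^sub>a - e\<^sub>b\<close> lies in the column space of the
  incidence matrix: add up the signed columns along a connecting walk.\<close>
lemma incidence_connected_range:
  assumes ok: "edges_in nv fs" and c: "connected_in fs a b" and a: "a < nv"
  shows "b < nv \<and> (\<exists>y \<in> carrier_vec (length fs). incidence nv fs *\<^sub>v y = unit_vec nv a - unit_vec nv b)"
  using c unfolding connected_in_def
proof (induction rule: rtranclp_induct)
  case base
  show ?case using a by (intro conjI bexI[of _ "0\<^sub>v (length fs)"], auto)
next
  case (step b c)
  then obtain y where y: "y \<in> carrier_vec (length fs)"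
    and Ey: "incidence nv fs *\<^sub>v y = unit_vec nv a - unit_vec nv b" by auto
  from step(2) obtain i where i: "i < length fs"
    and or: "(b, c) = fs ! i \<or> (c, b) = fs ! i"
    unfolding adj_def by (auto simp: in_set_conv_nth)
  let ?u = "unit_vec (length fs) i" and ?E = "incidence nv fs"
  have Eu: "?E *\<^sub>v ?u = unit_vec nv (fst (fs!i)) - unit_vec nv (snd (fs!i))"
    using incidence_col[OF ok i] mult_unit_vec_col[OF incidence_carrier i] by simp
  have nv: "fst (fs!i) < nv" "snd (fs!i) < nv" using edges_in_nth[OF ok i] by auto
  from or show ?case
  proof
    assume bc: "(b, c) = fs ! i"
    have "?E *\<^sub>v (y + ?u) = ?E *\<^sub>v y + ?E *\<^sub>v ?u"
      using y by (intro mult_add_distrib_mat_vec[of _ nv "length fs"], auto)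
    also have "\<dots> = unit_vec nv a - unit_vec nv c" unfolding Ey Eu bc[symmetric]
      by (intro eq_vecI, auto)
    finally show ?thesis using bc[symmetric] nv y by (intro conjI bexI[of _ "y + ?u"], auto)
  next
    assume cb: "(c, b) = fs ! i"
    have "?E *\<^sub>v (y - ?u) = ?E *\<^sub>v y - ?E *\<^sub>v ?u"
      using y by (intro mult_minus_distrib_mat_vec[of _ nv "length fs"], auto)
    also have "\<dots> = unit_vec nv a - unit_vec nv c" unfolding Ey Eu cb[symmetric]
      by (intro eq_vecI, auto)
    finally show ?thesis using cb[symmetric] nv y by (intro conjI bexI[of _ "y - ?u"], auto)
  qed
qed

section \<open>The forest factorisation \<open>E = E\<^sub>F R\<close>\<close>

lemma edge_laplacian_det_nonzero:
  assumes "edges_in nv fs" "acyclic_edges fs"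
  shows "det (edge_laplacian nv fs) \<noteq> 0"
  unfolding edge_laplacian_def
  by (rule gram_det_nonzero[OF incidence_carrier], rule incidence_acyclic_kernel[OF assms])

text \<open>If the forest connects the endpoints of every cycle edge, then the projection
  \<open>E\<^sub>F L\<^sub>e(F)\<^sup>-\<^sup>1 E\<^sub>F\<^sup>T\<close> fixes the columns of \<open>E\<^sub>C\<close>: each lies in the range of \<open>E\<^sub>F\<close>.\<close>
lemma forest_reproduces_cycle_columns:
  fixes nv k :: nat and es :: "(nat \<times> nat) list" and Gi :: "real mat"
  defines "EF \<equiv> incidence nv (take k es)" and "EC \<equiv> incidence nv (drop k es)"
  assumes ok: "edges_in nv es" and km: "k \<le> length es"
    and conn: "\<And>u v. u < nv \<Longrightarrow> v < nv \<Longrightarrow> connected_in es u v \<Longrightarrow> connected_in (take k es) u v"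
    and Gi: "Gi \<in> carrier_mat k k" and inv: "Gi * edge_laplacian nv (take k es) = 1\<^sub>m k"
  shows "EF * (Gi * transpose_mat EF * EC) = EC"
proof -
  define P where "P = EF * (Gi * transpose_mat EF)"
  have EF: "EF \<in> carrier_mat nv k" unfolding EF_def using km incidence_carrier[of nv "take k es"] by simp
  have EC: "EC \<in> carrier_mat nv (length es - k)" unfolding EC_def
    using incidence_carrier[of nv "drop k es"] by simp
  have P: "P \<in> carrier_mat nv nv" unfolding P_def using EF Gi by auto
  have PEF: "P * EF = EF"
  proof -
    have "P * EF = EF * (Gi * transpose_mat EF * EF)"
      unfolding P_def using EF Gi by (intro assoc_mult_mat[of _ nv k _ nv _ k]) auto
    also have "Gi * transpose_mat EF * EF = Gi * (transpose_mat EF * EF)"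
      using EF Gi by (intro assoc_mult_mat[of _ k k _ nv _ k]) auto
    also have "Gi * (transpose_mat EF * EF) = 1\<^sub>m k"
      using inv unfolding edge_laplacian_def EF_def .
    finally show ?thesis using EF by simp
  qed
  have fixes_col: "P *\<^sub>v col EC j = col EC j" if j: "j < length es - k" for j
  proof -
    obtain a b where ab: "drop k es ! j = (a, b)" by force
    have jd: "j < length (drop k es)" using j by simp
    have colEC: "col EC j = unit_vec nv a - unit_vec nv b"
      using incidence_col[OF edges_in_drop[OF ok] jd] ab unfolding EC_def by simp
    have nv: "a < nv" "b < nv" using edges_in_nth[OF edges_in_drop[OF ok] jd] ab by auto
    have "(a, b) \<in> set es" using nth_mem[OF jd] ab by (auto dest: in_set_dropD)
    hence "connected_in es a b" unfolding connected_in_def adj_def by auto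
    then obtain y where y: "y \<in> carrier_vec k" and Ey: "EF *\<^sub>v y = col EC j"
      using incidence_connected_range[OF edges_in_take[OF ok] conn[OF nv] nv(1)] km colEC
      unfolding EF_def by auto
    have "P *\<^sub>v (EF *\<^sub>v y) = (P * EF) *\<^sub>v y" using P EF y by simp
    thus ?thesis using Ey PEF by simp
  qed
  have "P * EC = EC"
  proof (rule mat_col_eqI)
    fix j assume "j < dim_col EC"
    hence j: "j < length es - k" using EC by auto
    show "col (P * EC) j = col EC j" using col_mult2[OF P EC j] fixes_col[OF j] by simp
  qed (use P EC in auto)
  moreover have "EF * (Gi * transpose_mat EF * EC) = P * EC"
    unfolding P_def using EF Gi EC
    by (intro assoc_mult_mat[symmetric, of _ nv k _ nv _ "length es - k"]) auto
  ultimately show ?thesis by simp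
qed

lemma incidence_forest_factor:
  assumes ok: "edges_in nv es" and km: "k \<le> length es" and acy: "acyclic_edges (take k es)"
    and conn: "\<And>u v. u < nv \<Longrightarrow> v < nv \<Longrightarrow> connected_in es u v \<Longrightarrow> connected_in (take k es) u v"
  shows "incidence nv es = incidence nv (take k es) * R_mat nv es k"
proof -
  define m where "m = length es"
  define EF where "EF = incidence nv (take k es)"
  define EC where "EC = incidence nv (drop k es)"
  define G where "G = edge_laplacian nv (take k es)"
  have EF: "EF \<in> carrier_mat nv k" unfolding EF_def using km incidence_carrier[of nv "take k es"] by simp
  have G: "G \<in> carrier_mat k k" unfolding G_def edge_laplacian_def EF_def[symmetric] using EF by auto
  obtain Gi where mi: "mat_inverse G = Some Gi" and inv: "Gi * G = 1\<^sub>m k" and Gi: "Gi \<in> carrier_mat k k"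
    using mat_inverse_nonsingular[OF G] edge_laplacian_det_nonzero[OF edges_in_take[OF ok] acy]
    unfolding G_def by blast
  define X where "X = Gi * transpose_mat EF * EC"
  have X: "X \<in> carrier_mat k (m - k)" unfolding X_def EC_def m_def using Gi EF by auto
  have EFX: "EF * X = EC"
    unfolding X_def EF_def EC_def by (rule forest_reproduces_cycle_columns[OF ok km conn Gi inv[unfolded G_def]])
  define R where "R = R_mat nv es k"
  have R_eq: "R = mat k m (\<lambda>(i,j). if j < k then (if i = j then 1 else 0) else X $$ (i, j - k))"
    unfolding R_def R_mat_def Let_def G_def[symmetric] mi X_def EF_def EC_def m_def
    by (simp only: option.sel)
  have R: "R \<in> carrier_mat k m" unfolding R_eq by simp
  have "EF * R = incidence nv es"
  proof (rule eq_matI)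
    fix v j assume "v < dim_row (incidence nv es)" "j < dim_col (incidence nv es)"
    hence v: "v < nv" and j: "j < m" unfolding m_def by auto
    show "(EF * R) $$ (v,j) = incidence nv es $$ (v,j)"
    proof (cases "j < k")
      case True
      have "col R j = unit_vec k j" unfolding R_eq using True j by (intro eq_vecI, auto)
      thus ?thesis using EF R v j True km unfolding EF_def m_def by (simp add: incidence_index)
    next
      case False
      have "col R j = col X (j - k)" unfolding R_eq using False j X by (intro eq_vecI, auto)
      hence "(EF * R) $$ (v,j) = (EF * X) $$ (v, j - k)" using EF R X v j False by simp
      thus ?thesis unfolding EFX EC_def using False v j km m_def by (simp add: incidence_index)
    qed
  qed (use EF R m_def in auto)
  thus ?thesis unfolding EF_def R_def ..
qed

section \<open>Spectra of the Laplacian and the essential edge Laplacian\<close>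

lemma laplacian_carrier: "laplacian nv es w \<in> carrier_mat nv nv"
  unfolding laplacian_def weight_mat_def by auto

lemma essential_edge_laplacian_carrier:
  "k \<le> length es \<Longrightarrow> essential_edge_laplacian nv es w k \<in> carrier_mat k k"
  unfolding essential_edge_laplacian_def edge_laplacian_def R_mat_def Let_def weight_mat_def
  by (auto simp: min_def)

text \<open>With \<open>E = E\<^sub>F R\<close> and \<open>M = R W R\<^sup>T\<close>, \<open>L = (E\<^sub>F M) E\<^sub>F\<^sup>T\<close> and \<open>L\<^sub>e\<^sub>s\<^sub>s = E\<^sub>F\<^sup>T (E\<^sub>F M)\<close>;
  Sylvester's identity then relates the characteristic polynomials, and since the
  forest has \<open>k = nv - c\<close> edges the Laplacian carries \<open>c\<close> extra zero roots.\<close>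
lemma cpoly_laplacian_essential:
  assumes ok: "edges_in nv es" and km: "k \<le> length es" and acy: "acyclic_edges (take k es)"
    and conn: "\<And>u v. u < nv \<Longrightarrow> v < nv \<Longrightarrow> connected_in es u v \<Longrightarrow> connected_in (take k es) u v"
    and nv: "nv = k + c"
  shows "cpoly (laplacian nv es w) = [:0,1:] ^ c * cpoly (essential_edge_laplacian nv es w k)"
proof -
  define m where "m = length es"
  define EF where "EF = incidence nv (take k es)"
  define R where "R = R_mat nv es k"
  define W where "W = weight_mat m w"
  define M where "M = R * W * transpose_mat R"
  have EF: "EF \<in> carrier_mat nv k" unfolding EF_def using km incidence_carrier[of nv "take k es"] by simp
  have R: "R \<in> carrier_mat k m" unfolding R_def R_mat_def m_def Let_def by simp
  have W: "W \<in> carrier_mat m m" unfolding W_def weight_mat_def by simp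
  have M: "M \<in> carrier_mat k k" unfolding M_def using R W by auto
  have ER: "incidence nv es = EF * R"
    unfolding EF_def R_def by (rule incidence_forest_factor[OF ok km acy conn])
  have EFRW: "EF * R * W = EF * (R * W)" by (rule assoc_mult_mat[OF EF R W])
  have EFM: "EF * (R * W) * transpose_mat R = EF * M"
    unfolding M_def using EF R W by (intro assoc_mult_mat[of _ nv k _ m _ k]) auto
  have "laplacian nv es w = EF * (R * W) * (transpose_mat R * transpose_mat EF)"
    unfolding laplacian_def ER transpose_mult[OF EF R] m_def[symmetric] W_def[symmetric] EFRW ..
  also have "\<dots> = EF * (R * W) * transpose_mat R * transpose_mat EF"
    using EF R W by (intro assoc_mult_mat[symmetric, of _ nv m _ k _ nv]) auto
  finally have L: "laplacian nv es w = (EF * M) * transpose_mat EF" unfolding EFM .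
  have EFT: "transpose_mat EF \<in> carrier_mat k nv" using EF by simp
  have "essential_edge_laplacian nv es w k = transpose_mat EF * EF * R * W * transpose_mat R"
    unfolding essential_edge_laplacian_def edge_laplacian_def
      EF_def[symmetric] R_def[symmetric] m_def[symmetric] W_def[symmetric] ..
  also have "transpose_mat EF * EF * R = transpose_mat EF * (EF * R)"
    by (rule assoc_mult_mat[OF EFT EF R])
  also have "transpose_mat EF * (EF * R) * W = transpose_mat EF * (EF * R * W)"
    using EF R W by (intro assoc_mult_mat[OF EFT]) auto
  also have "transpose_mat EF * (EF * R * W) * transpose_mat R
      = transpose_mat EF * (EF * R * W * transpose_mat R)"
    using EF R W by (intro assoc_mult_mat[OF EFT]) auto
  finally have Le: "essential_edge_laplacian nv es w k = transpose_mat EF * (EF * M)"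
    unfolding EFRW EFM .
  have A: "EF * M \<in> carrier_mat nv k" using EF M by simp
  have "[:0,1:] ^ k * cpoly (laplacian nv es w) = [:0,1:] ^ nv * cpoly (essential_edge_laplacian nv es w k)"
    unfolding cpoly_def L Le of_real_hom.mat_hom_mult[OF A EFT] of_real_hom.mat_hom_mult[OF EFT A]
    by (rule char_poly_mult_commute) (use A EFT in auto)
  thus ?thesis unfolding nv power_add by (simp add: ac_simps)
qed

lemma laplacian_symmetric: "transpose_mat (laplacian nv es w) = laplacian nv es w"
proof -
  define E where "E = incidence nv es"
  define W where "W = weight_mat (length es) w"
  have E: "E \<in> carrier_mat nv (length es)" and W: "W \<in> carrier_mat (length es) (length es)"
    unfolding E_def W_def weight_mat_def by auto
  have WT: "transpose_mat W = W" unfolding W_def weight_mat_def by (intro eq_matI, auto)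
  have "transpose_mat (E * W * transpose_mat E) = E * transpose_mat (E * W)"
    using E W transpose_mult[of "E * W" nv "length es" "transpose_mat E" nv] by simp
  also have "\<dots> = E * (W * transpose_mat E)" using E W WT by (simp add: transpose_mult[OF E W])
  also have "\<dots> = E * W * transpose_mat E" using E W by simp
  finally show ?thesis unfolding laplacian_def E_def W_def .
qed

lemma spectrum_transfer:
  assumes eq: "cpoly L = [:0,1:] ^ c * cpoly L'" and nz: "cpoly L' \<noteq> 0"
    and real: "only_real_eigenvalues L"
  shows "only_real_eigenvalues L' \<and> n_pos L' = n_pos L \<and> n_neg L' = n_neg L
    \<and> n_zero L = c + n_zero L'"
proof -
  have nzL: "cpoly L \<noteq> 0" using nz unfolding eq by simp
  have ord: "order z (cpoly L) = (if z = 0 then c else 0) + order z (cpoly L')" for z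
  proof -
    have "order z ([:0,1::complex:] ^ c) = (if z = 0 then c else 0)"
      using order_power_n_n[of 0 c] by (auto intro: order_0I)
    thus ?thesis using order_mult[OF nzL[unfolded eq]] unfolding eq by simp
  qed
  have root: "poly (cpoly L) z = 0 \<longleftrightarrow> poly (cpoly L') z = 0" if "z \<noteq> 0" for z
    using that unfolding eq by simp
  have same: "{z. poly (cpoly L') z = 0 \<and> Im z = 0 \<and> P (Re z)} =
      {z. poly (cpoly L) z = 0 \<and> Im z = 0 \<and> P (Re z)}"
    and same_order: "\<And>z. z \<in> {z. poly (cpoly L) z = 0 \<and> Im z = 0 \<and> P (Re z)} \<Longrightarrow>
      order z (cpoly L') = order z (cpoly L)"
    if "\<not> P 0" for P :: "real \<Rightarrow> bool"
  proof -
    have "z \<noteq> 0" if "P (Re z)" for z using that \<open>\<not> P 0\<close> by auto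
    thus "{z. poly (cpoly L') z = 0 \<and> Im z = 0 \<and> P (Re z)} =
      {z. poly (cpoly L) z = 0 \<and> Im z = 0 \<and> P (Re z)}"
      and "\<And>z. z \<in> {z. poly (cpoly L) z = 0 \<and> Im z = 0 \<and> P (Re z)} \<Longrightarrow>
      order z (cpoly L') = order z (cpoly L)" using root ord by auto
  qed
  have "only_real_eigenvalues L'"
    using real root unfolding only_real_eigenvalues_def by (metis zero_complex.sel(2))
  moreover have "n_pos L' = n_pos L" unfolding n_pos_def
    by (rule sum.cong) (use same[of "\<lambda>x. 0 < x"] same_order[of "\<lambda>x. 0 < x"] in auto)
  moreover have "n_neg L' = n_neg L" unfolding n_neg_def
    by (rule sum.cong) (use same[of "\<lambda>x. x < 0"] same_order[of "\<lambda>x. x < 0"] in auto)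
  moreover have "n_zero L = c + n_zero L'"
    using ord[of 0] nz nzL order_0I unfolding n_zero_def by auto
  ultimately show ?thesis by simp
qed

theorem theorem1:
  fixes nv :: nat and es :: "(nat \<times> nat) list" and w :: "nat \<Rightarrow> real"
    and c k np nm n0 :: nat
  assumes "valid_graph nv es"
    and "\<forall>i<length es. w i \<noteq> 0"
    and "c = num_components nv es"
    and "spanning_forest_prefix nv es k"
    and "n_pos (laplacian nv es w) = np"
    and "n_neg (laplacian nv es w) = nm"
    and "n_zero (laplacian nv es w) = n0"
  shows "only_real_eigenvalues (essential_edge_laplacian nv es w k)
    \<and> n_pos (essential_edge_laplacian nv es w k) = np
    \<and> n_neg (essential_edge_laplacian nv es w k) = nm
    \<and> int (n_zero (essential_edge_laplacian nv es w k)) = int n0 - int c"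
proof -
  have ok: "edges_in nv es" using assms(1) unfolding valid_graph_def edges_in_def by auto
  have km: "k \<le> length es" and k: "k = nv - c" and acy: "acyclic_edges (take k es)"
    and conn: "\<And>u v. u < nv \<Longrightarrow> v < nv \<Longrightarrow> connected_in es u v \<Longrightarrow> connected_in (take k es) u v"
    using assms(3,4) unfolding spanning_forest_prefix_def by auto
  have nv: "nv = k + c" using k num_components_le[of nv es] assms(3) by simp
  have real: "only_real_eigenvalues (laplacian nv es w)"
    unfolding only_real_eigenvalues_def cpoly_def
    using symmetric_real_eigenvalues[OF laplacian_carrier laplacian_symmetric] by blast
  from spectrum_transfer[OF cpoly_laplacian_essential[OF ok km acy conn nv]
      cpoly_nonzero[OF essential_edge_laplacian_carrier[OF km]] real]
  show ?thesis unfolding assms(5-7)[symmetric] by simp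
qed

end
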